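(* Let $f:\mathbb{R}^d\to\mathbb{R}$ be subdifferentially polynomially bounded (SPB) with parameters $\mathrm{R}_1\ge 0$, $\mathrm{R}_2>0$ and integer $m\ge 0$. Then for all $x,y\in\mathbb{R}^d$, \[ |f(x)-f(y)|\le\big(2^{m-1}\mathrm{R}_1\|x\|^m+2^{m-1}\mathrm{R}_1\|y-x\|^m+\mathrm{R}_2\big)\|x-y\|. \]
   Context: $\|\cdot\|$ is the Euclidean norm. For a locally Lipschitz $f:\mathbb{R}^d\to\mathbb{R}$, $\partial_C f(x)$ denotes the Clarke subdifferential. $f$ is called SPB with parameters $\mathrm{R}_1\ge0$, $\mathrm{R}_2>0$ and integer $m\ge 0$ (where $\mathrm{R}_1=0$ if and only if $m=0$) if $f$ is locally Lipschitz and $\sup_{\zeta\in\partial_C f(x)}\|\zeta\|\le \mathrm{R}_1\|x\|^m+\mathrm{R}_2$ for all $x\in\mathbb{R}^d$. The convention $0^0=1$ is used. *)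

theory Defs
  imports "HOL-Analysis.Analysis"
begin

definition locally_lipschitz :: "('a::euclidean_space \<Rightarrow> real) \<Rightarrow> bool" where
  "locally_lipschitz f \<longleftrightarrow>
     (\<forall>x. \<exists>e>0. \<exists>L. \<forall>y\<in>ball x e. \<forall>z\<in>ball x e. \<bar>f y - f z\<bar> \<le> L * dist y z)"

definition clarke_dir_deriv :: "('a::euclidean_space \<Rightarrow> real) \<Rightarrow> 'a \<Rightarrow> 'a \<Rightarrow> ereal" where
  "clarke_dir_deriv f x v =
     Limsup (nhds x \<times>\<^sub>F at_right 0) (\<lambda>(y, t). ereal ((f (y + t *\<^sub>R v) - f y) / t))"

definition clarke_subdiff :: "('a::euclidean_space \<Rightarrow> real) \<Rightarrow> 'a \<Rightarrow> 'a set" where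
  "clarke_subdiff f x = {\<zeta>. \<forall>v. ereal (\<zeta> \<bullet> v) \<le> clarke_dir_deriv f x v}"

definition SPB :: "('a::euclidean_space \<Rightarrow> real) \<Rightarrow> real \<Rightarrow> real \<Rightarrow> nat \<Rightarrow> bool" where
  "SPB f R1 R2 m \<longleftrightarrow> R1 \<ge> 0 \<and> R2 > 0 \<and> (R1 = 0 \<longleftrightarrow> m = 0) \<and>
     locally_lipschitz f \<and>
     (\<forall>x. \<forall>\<zeta>\<in>clarke_subdiff f x. norm \<zeta> \<le> R1 * norm x ^ m + R2)"

end

theory Submission
  imports Defs
begin

(* For a locally Lipschitz f the Clarke directional derivative v \<mapsto> f\<degree>(z; v) is a finite
   sublinear function; separating a point below its graph from its closed convex epigraph
   produces elements \<zeta> of the Clarke subdifferential with f\<degree>(z; w) \<le> \<zeta> \<bullet> w + \<delta>, so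
   f\<degree>(z; w) \<le> (sup of norm \<zeta>) * norm w.  Since f\<degree> dominates the upper right Dini derivative,
   a Dini-type mean value argument on the segment from x to y bounds f y - f x by the largest
   subgradient norm on the segment times norm (y - x); every point p of the segment has
   norm p \<le> norm x + norm (y - x), and (A + C)^m \<le> 2^(m-1) (A^m + C^m) by convexity of t^m. *)

abbreviation clarke_net :: "'a::real_normed_vector \<Rightarrow> ('a \<times> real) filter" where
  "clarke_net z \<equiv> nhds z \<times>\<^sub>F at_right 0"

definition diff_quot :: "('a::real_vector \<Rightarrow> real) \<Rightarrow> 'a \<Rightarrow> 'a \<times> real \<Rightarrow> real" where
  "diff_quot f v x = (f (fst x + snd x *\<^sub>R v) - f (fst x)) / snd x"

lemma clarke_dir_deriv_diff_quot:
  "clarke_dir_deriv f z v = Limsup (clarke_net z) (\<lambda>x. ereal (diff_quot f v x))"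
  by (simp add: clarke_dir_deriv_def diff_quot_def case_prod_beta')

lemma clarke_net_neq_bot: "clarke_net z \<noteq> bot"
  by (simp add: prod_filter_eq_bot)

lemma eventually_snd_pos_clarke_net: "eventually (\<lambda>x. 0 < snd x) (clarke_net z)"
  using filterlim_snd[of "at_right (0::real)" "nhds z"]
  unfolding filterlim_at by (auto elim: eventually_mono)

lemma tendsto_snd_clarke_net: "(snd \<longlongrightarrow> 0) (clarke_net z)"
  using filterlim_snd[of "at_right (0::real)" "nhds z"] filterlim_at by blast

lemma tendsto_shift_clarke_net: "((\<lambda>x. fst x + snd x *\<^sub>R v) \<longlongrightarrow> z) (clarke_net z)"
  using tendsto_add[OF filterlim_fst tendsto_scaleR[OF tendsto_snd_clarke_net tendsto_const]]
  by simp

lemma filterlim_shift_clarke_net: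
  "filterlim (\<lambda>x. (fst x + snd x *\<^sub>R v, snd x)) (clarke_net z) (clarke_net z)"
  by (intro filterlim_Pair tendsto_shift_clarke_net filterlim_snd)

lemma filterlim_scale_clarke_net:
  assumes "c > 0"
  shows "filterlim (\<lambda>x. (fst x, c * snd x)) (clarke_net z) (clarke_net z)"
proof (intro filterlim_Pair filterlim_fst)
  have "((\<lambda>x. c * snd x) \<longlongrightarrow> 0) (clarke_net z)"
    using tendsto_mult_right_zero[OF tendsto_snd_clarke_net] .
  moreover have "eventually (\<lambda>x. 0 < c * snd x) (clarke_net z)"
    using eventually_snd_pos_clarke_net by eventually_elim (use assms in simp)
  ultimately show "filterlim (\<lambda>x. c * snd x) (at_right 0) (clarke_net z)"
    by (auto simp: filterlim_at elim: eventually_mono)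
qed

lemma locally_lipschitz_imp_continuous:
  assumes "locally_lipschitz f"
  shows "continuous_on UNIV f"
proof (rule continuous_at_imp_continuous_on, intro ballI)
  fix x
  obtain e L where "e > 0" and L: "\<forall>y\<in>ball x e. \<forall>z\<in>ball x e. \<bar>f y - f z\<bar> \<le> L * dist y z"
    using assms unfolding locally_lipschitz_def by blast
  have "(max L 0)-lipschitz_on (ball x e) f"
    unfolding lipschitz_on_def dist_real_def
    by (metis L max.cobounded1 max.cobounded2 mult_right_mono zero_le_dist order_trans)
  then have "continuous_on (ball x e) f"
    by (rule lipschitz_on_continuous_on)
  then show "isCont f x"
    by (rule continuous_on_interior) (use \<open>e > 0\<close> in simp)
qed

lemma locally_lipschitz_diff_quot_bounded:
  assumes "locally_lipschitz f"
  obtains L where "\<And>v. eventually (\<lambda>x. \<bar>diff_quot f v x\<bar> \<le> L * norm v) (clarke_net z)"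
proof -
  obtain e L where "e > 0" and L: "\<forall>y\<in>ball z e. \<forall>y'\<in>ball z e. \<bar>f y - f y'\<bar> \<le> L * dist y y'"
    using assms unfolding locally_lipschitz_def by blast
  have "eventually (\<lambda>x. \<bar>diff_quot f v x\<bar> \<le> L * norm v) (clarke_net z)" for v
  proof -
    have "eventually (\<lambda>x. fst x \<in> ball z e) (clarke_net z)"
      using tendstoD[OF filterlim_fst \<open>e > 0\<close>] by (simp add: dist_commute)
    moreover have "eventually (\<lambda>x. fst x + snd x *\<^sub>R v \<in> ball z e) (clarke_net z)"
      using tendstoD[OF tendsto_shift_clarke_net \<open>e > 0\<close>] by (simp add: dist_commute)
    ultimately show ?thesis
      using eventually_snd_pos_clarke_net
    proof eventually_elim
      case (elim x)
      then have "\<bar>f (fst x + snd x *\<^sub>R v) - f (fst x)\<bar> \<le> L * dist (fst x + snd x *\<^sub>R v) (fst x)"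
        using L by blast
      also have "\<dots> = L * (snd x * norm v)"
        using elim by (simp add: dist_norm)
      finally have "\<bar>f (fst x + snd x *\<^sub>R v) - f (fst x)\<bar> \<le> L * (snd x * norm v)" .
      then show ?case
        using elim by (simp add: diff_quot_def divide_le_eq mult_ac)
    qed
  qed
  then show ?thesis using that by blast
qed

lemma clarke_dir_deriv_finite:
  assumes "locally_lipschitz f"
  shows "\<bar>clarke_dir_deriv f z v\<bar> \<noteq> \<infinity>"
proof -
  obtain L where L: "eventually (\<lambda>x. \<bar>diff_quot f v x\<bar> \<le> L * norm v) (clarke_net z)"
    using locally_lipschitz_diff_quot_bounded[OF assms] by blast
  have "clarke_dir_deriv f z v \<le> ereal (L * norm v)"
    unfolding clarke_dir_deriv_diff_quot
    by (rule Limsup_bounded) (use L in \<open>auto elim: eventually_mono\<close>)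
  moreover have "ereal (- (L * norm v)) \<le> clarke_dir_deriv f z v"
    unfolding clarke_dir_deriv_diff_quot
    by (rule le_Limsup[OF clarke_net_neq_bot]) (use L in \<open>auto elim: eventually_mono\<close>)
  ultimately show ?thesis
    by (cases "clarke_dir_deriv f z v") auto
qed

lemma clarke_dir_deriv_leI:
  assumes "\<And>e. e > 0 \<Longrightarrow> eventually (\<lambda>x. diff_quot f v x \<le> c + e) (clarke_net z)"
  shows "clarke_dir_deriv f z v \<le> ereal c"
proof (rule ereal_le_epsilon2)
  fix e :: real
  assume "e > 0"
  have "clarke_dir_deriv f z v \<le> ereal (c + e)"
    unfolding clarke_dir_deriv_diff_quot
    by (rule Limsup_bounded) (use assms[OF \<open>e > 0\<close>] in \<open>auto elim: eventually_mono\<close>)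
  then show "clarke_dir_deriv f z v \<le> ereal c + ereal e"
    by simp
qed

lemma clarke_dir_deriv_lessD:
  assumes "clarke_dir_deriv f z v < ereal c"
  shows "eventually (\<lambda>x. diff_quot f v x < c) (clarke_net z)"
  using Limsup_lessD[OF assms[unfolded clarke_dir_deriv_diff_quot]] by simp

lemma clarke_dir_deriv_add_le:
  assumes "locally_lipschitz f"
  shows "clarke_dir_deriv f z (v + w) \<le> clarke_dir_deriv f z v + clarke_dir_deriv f z w"
proof -
  obtain a b where a: "clarke_dir_deriv f z v = ereal a" and b: "clarke_dir_deriv f z w = ereal b"
    by (metis ereal_real' clarke_dir_deriv_finite[OF assms])
  have "clarke_dir_deriv f z (v + w) \<le> ereal (a + b)"
  proof (rule clarke_dir_deriv_leI)
    fix e :: real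
    assume "e > 0"
    have "eventually (\<lambda>x. diff_quot f v x < a + e/2) (clarke_net z)"
      by (rule clarke_dir_deriv_lessD) (use a \<open>e > 0\<close> in simp)
    moreover have "eventually (\<lambda>x. diff_quot f w x < b + e/2) (clarke_net z)"
      by (rule clarke_dir_deriv_lessD) (use b \<open>e > 0\<close> in simp)
    then have "eventually (\<lambda>x. diff_quot f w (fst x + snd x *\<^sub>R v, snd x) < b + e/2) (clarke_net z)"
      using filterlim_shift_clarke_net unfolding filterlim_iff by blast
    ultimately show "eventually (\<lambda>x. diff_quot f (v + w) x \<le> a + b + e) (clarke_net z)"
    proof eventually_elim
      case (elim x)
      have "diff_quot f (v + w) x = diff_quot f w (fst x + snd x *\<^sub>R v, snd x) + diff_quot f v x"
        unfolding diff_quot_def by (simp add: scaleR_add_right add.assoc diff_divide_distrib)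
      then show ?case
        using elim by simp
    qed
  qed
  then show ?thesis
    using a b by simp
qed

lemma clarke_dir_deriv_scaleR_le:
  assumes "locally_lipschitz f" and "c > 0"
  shows "clarke_dir_deriv f z (c *\<^sub>R v) \<le> ereal c * clarke_dir_deriv f z v"
proof -
  obtain a where a: "clarke_dir_deriv f z v = ereal a"
    by (metis ereal_real' clarke_dir_deriv_finite[OF assms(1)])
  have "clarke_dir_deriv f z (c *\<^sub>R v) \<le> ereal (c * a)"
  proof (rule clarke_dir_deriv_leI)
    fix e :: real
    assume "e > 0"
    have "eventually (\<lambda>x. diff_quot f v x < a + e/c) (clarke_net z)"
      by (rule clarke_dir_deriv_lessD) (use a \<open>e > 0\<close> \<open>c > 0\<close> in simp)
    then have "eventually (\<lambda>x. diff_quot f v (fst x, c * snd x) < a + e/c) (clarke_net z)"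
      using filterlim_scale_clarke_net[OF \<open>c > 0\<close>] unfolding filterlim_iff by blast
    then show "eventually (\<lambda>x. diff_quot f (c *\<^sub>R v) x \<le> c * a + e) (clarke_net z)"
    proof eventually_elim
      case (elim x)
      have "diff_quot f (c *\<^sub>R v) x = c * diff_quot f v (fst x, c * snd x)"
        unfolding diff_quot_def using \<open>c > 0\<close> by (cases "snd x = 0") (simp_all add: mult.commute)
      also have "\<dots> \<le> c * a + e"
        using elim \<open>c > 0\<close> by (simp add: field_simps)
      finally show ?case .
    qed
  qed
  then show ?thesis
    using a by simp
qed

lemma sublinear_imp_convex_on:
  fixes q :: "'a::real_vector \<Rightarrow> real"
  assumes add: "\<And>v w. q (v + w) \<le> q v + q w"
    and scale: "\<And>c v. c > 0 \<Longrightarrow> q (c *\<^sub>R v) \<le> c * q v"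
  shows "convex_on UNIV q"
proof (rule convex_onI)
  fix t :: real and v w :: 'a
  assume t: "0 < t" "t < 1"
  have "q ((1 - t) *\<^sub>R v + t *\<^sub>R w) \<le> q ((1 - t) *\<^sub>R v) + q (t *\<^sub>R w)"
    by (rule add)
  also have "\<dots> \<le> (1 - t) * q v + t * q w"
    using t by (intro add_mono scale) auto
  finally show "q ((1 - t) *\<^sub>R v + t *\<^sub>R w) \<le> (1 - t) * q v + t * q w" .
qed simp

lemma pos_homogeneous_linear_minorant:
  fixes q :: "'a::real_inner \<Rightarrow> real"
  assumes scale: "\<And>c v. c > 0 \<Longrightarrow> q (c *\<^sub>R v) \<le> c * q v"
    and bounded: "\<And>v. \<zeta> \<bullet> v - q v \<le> M"
  shows "\<zeta> \<bullet> v \<le> q v"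
proof (rule ccontr)
  assume "\<not> \<zeta> \<bullet> v \<le> q v"
  then have gap: "\<zeta> \<bullet> v - q v > 0"
    by simp
  define c where "c = (\<bar>M\<bar> + 1) / (\<zeta> \<bullet> v - q v)"
  have "c > 0"
    using gap unfolding c_def by (simp add: add_nonneg_pos)
  have "c * (\<zeta> \<bullet> v - q v) \<le> \<zeta> \<bullet> (c *\<^sub>R v) - q (c *\<^sub>R v)"
    using scale[OF \<open>c > 0\<close>, of v] by (simp add: algebra_simps)
  also have "\<dots> \<le> M"
    using bounded[of "c *\<^sub>R v"] by simp
  finally show False
    using gap unfolding c_def by simp
qed

lemma convex_on_affine_minorant:
  fixes q :: "'a::euclidean_space \<Rightarrow> real"
  assumes "convex_on UNIV q" and "r < q v0"
  obtains \<zeta> M where "\<And>v. \<zeta> \<bullet> v - q v \<le> M" and "r < \<zeta> \<bullet> v0 - M"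
proof -
  have "continuous_on UNIV q"
    using convex_on_continuous[OF open_UNIV assms(1)] .
  then have "continuous_on UNIV (\<lambda>x::'a \<times> real. q (fst x))"
    using continuous_on_compose[OF continuous_on_fst[OF continuous_on_id], of UNIV q]
    by (simp add: o_def)
  then have "closed {x. q (fst x) \<le> snd x}"
    by (rule closed_Collect_le) (rule continuous_on_snd[OF continuous_on_id])
  then have "closed (epigraph UNIV q)"
    by (simp add: epigraph_def)
  moreover have "convex (epigraph UNIV q)"
    using assms(1) by (rule convex_epigraphI)
  moreover have "(v0, r) \<notin> epigraph UNIV q"
    using assms(2) by (simp add: mem_epigraph)
  ultimately obtain a b where below: "a \<bullet> (v0, r) < b" and above: "\<forall>x\<in>epigraph UNIV q. b < a \<bullet> x"
    using separating_hyperplane_closed_point by blast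
  have above': "b < fst a \<bullet> v + snd a * q v" for v
    using above[rule_format, of "(v, q v)"] by (simp add: mem_epigraph inner_prod_def)
  have below': "fst a \<bullet> v0 + snd a * r < b"
    using below by (simp add: inner_prod_def)
  have "snd a * (q v0 - r) > 0"
    using above'[of v0] below' by (simp add: right_diff_distrib)
  then have "snd a > 0"
    using assms(2) by (simp add: zero_less_mult_iff)
  define \<zeta> where "\<zeta> = (- 1 / snd a) *\<^sub>R fst a"
  define M where "M = - b / snd a"
  have \<zeta>_inner: "\<zeta> \<bullet> v = - (fst a \<bullet> v) / snd a" for v
    unfolding \<zeta>_def by simp
  have "\<zeta> \<bullet> v - q v \<le> M" for v
  proof -
    have "- (fst a \<bullet> v) \<le> snd a * q v - b"
      using above'[of v] by simp
    then have "- (fst a \<bullet> v) / snd a \<le> (snd a * q v - b) / snd a"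
      using \<open>snd a > 0\<close> by (intro divide_right_mono) auto
    also have "\<dots> = q v - b / snd a"
      using \<open>snd a > 0\<close> by (simp add: diff_divide_distrib)
    finally show ?thesis
      unfolding \<zeta>_inner M_def by simp
  qed
  moreover have "r < \<zeta> \<bullet> v0 - M"
  proof -
    have "r * snd a < b - fst a \<bullet> v0"
      using below' by (simp add: mult.commute)
    then have "r < (b - fst a \<bullet> v0) / snd a"
      using pos_less_divide_eq[OF \<open>snd a > 0\<close>] by blast
    then show ?thesis
      unfolding \<zeta>_inner M_def by (simp add: diff_divide_distrib)
  qed
  ultimately show ?thesis
    using that by blast
qed

lemma sublinear_linear_minorant_approx:
  fixes q :: "'a::euclidean_space \<Rightarrow> real"
  assumes add: "\<And>v w. q (v + w) \<le> q v + q w"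
    and scale: "\<And>c v. c > 0 \<Longrightarrow> q (c *\<^sub>R v) \<le> c * q v"
    and "\<delta> > 0"
  obtains \<zeta> where "\<And>v. \<zeta> \<bullet> v \<le> q v" and "q v0 < \<zeta> \<bullet> v0 + \<delta>"
proof -
  have "convex_on UNIV q"
    using add scale by (rule sublinear_imp_convex_on)
  then obtain \<zeta> M where affine: "\<And>v. \<zeta> \<bullet> v - q v \<le> M" and near: "q v0 - \<delta> < \<zeta> \<bullet> v0 - M"
    using convex_on_affine_minorant[of q "q v0 - \<delta>" v0] \<open>\<delta> > 0\<close> by auto
  have "q 0 \<le> 0"
    using scale[of "1/2" 0] by simp
  then have "M \<ge> 0"
    using affine[of 0] by simp
  then show ?thesis
    using that pos_homogeneous_linear_minorant[OF scale affine] near by force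
qed

lemma clarke_dir_deriv_le_subdiff_bound:
  assumes "locally_lipschitz f"
    and bound: "\<And>\<zeta>. \<zeta> \<in> clarke_subdiff f z \<Longrightarrow> norm \<zeta> \<le> B"
  shows "clarke_dir_deriv f z w \<le> ereal (B * norm w)"
proof -
  define q where "q v = real_of_ereal (clarke_dir_deriv f z v)" for v
  have q: "clarke_dir_deriv f z v = ereal (q v)" for v
    unfolding q_def using ereal_real'[OF clarke_dir_deriv_finite[OF assms(1)]] by simp
  have "q w \<le> B * norm w"
  proof (rule field_le_epsilon)
    fix \<delta> :: real
    assume "\<delta> > 0"
    have add: "q (v + v') \<le> q v + q v'" for v v'
      using clarke_dir_deriv_add_le[OF assms(1), of z v v'] by (simp add: q)
    have scale: "q (c *\<^sub>R v) \<le> c * q v" if "c > 0" for c v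
      using clarke_dir_deriv_scaleR_le[OF assms(1) that, of z v] by (simp add: q)
    obtain \<zeta> where minorant: "\<And>v. \<zeta> \<bullet> v \<le> q v" and near: "q w < \<zeta> \<bullet> w + \<delta>"
      using sublinear_linear_minorant_approx[OF add scale \<open>\<delta> > 0\<close>] by blast
    have "\<zeta> \<in> clarke_subdiff f z"
      unfolding clarke_subdiff_def using minorant by (simp add: q)
    then have "\<zeta> \<bullet> w \<le> B * norm w"
      using bound norm_cauchy_schwarz[of \<zeta> w] by (meson mult_right_mono norm_ge_zero order_trans)
    then show "q w \<le> B * norm w + \<delta>"
      using near by simp
  qed
  then show ?thesis
    by (simp add: q)
qed

lemma eventually_diff_le_of_clarke_dir_deriv_less:
  assumes "clarke_dir_deriv f z w < ereal c"
  shows "eventually (\<lambda>t. f (z + t *\<^sub>R w) - f z \<le> c * t) (at_right 0)"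
proof -
  obtain P Q where "eventually P (nhds z)" "eventually Q (at_right 0)"
    and PQ: "\<And>y t. P y \<Longrightarrow> Q t \<Longrightarrow> diff_quot f w (y, t) < c"
    using clarke_dir_deriv_lessD[OF assms] unfolding eventually_prod_filter by auto
  then have "P z"
    using eventually_nhds_x_imp_x by blast
  show ?thesis
    using \<open>eventually Q (at_right 0)\<close> eventually_at_right_less[of "0::real"]
  proof eventually_elim
    case (elim t)
    then show ?case
      using PQ[OF \<open>P z\<close>] by (simp add: diff_quot_def divide_less_eq less_imp_le)
  qed
qed

lemma upper_dini_mean_value_le:
  fixes g :: "real \<Rightarrow> real"
  assumes cont: "continuous_on UNIV g"
    and dini: "\<And>s e. s \<in> {0..<1} \<Longrightarrow> e > 0 \<Longrightarrow> eventually (\<lambda>t. g (s + t) - g s \<le> (c + e) * t) (at_right 0)"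
  shows "g 1 - g 0 \<le> c"
proof (rule field_le_epsilon)
  fix e :: real
  assume "e > 0"
  define S where "S = {0..1} \<inter> {s. g s - g 0 \<le> (c + e) * s}"
  have "closed S"
    unfolding S_def
    by (intro closed_Int closed_atLeastAtMost closed_Collect_le continuous_intros
        continuous_on_compose2[OF cont]) auto
  moreover have "0 \<in> S" "bdd_above S"
    unfolding S_def by (auto intro: bdd_aboveI[of _ 1])
  ultimately have "Sup S \<in> S"
    by (intro closed_contains_Sup) auto
  have "Sup S = 1"
  proof (rule ccontr)
    assume "Sup S \<noteq> 1"
    with \<open>Sup S \<in> S\<close> have s: "Sup S \<in> {0..<1}"
      unfolding S_def by auto
    from dini[OF s \<open>e > 0\<close>] obtain b where "b > 0"
      and step: "\<And>t. 0 < t \<Longrightarrow> t < b \<Longrightarrow> g (Sup S + t) - g (Sup S) \<le> (c + e) * t"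
      unfolding eventually_at_right[OF zero_less_one] by blast
    define t where "t = min (b/2) (1 - Sup S)"
    have t: "0 < t" "t < b" "Sup S + t \<le> 1"
      using \<open>b > 0\<close> s unfolding t_def by auto
    have "g (Sup S + t) - g 0 \<le> (c + e) * (Sup S + t)"
      using step[OF t(1,2)] \<open>Sup S \<in> S\<close> unfolding S_def by (simp add: algebra_simps)
    then have "Sup S + t \<in> S"
      using t s unfolding S_def by simp
    then have "Sup S + t \<le> Sup S"
      by (rule cSup_upper) fact
    then show False
      using t by simp
  qed
  then show "g 1 - g 0 \<le> c + e"
    using \<open>Sup S \<in> S\<close> unfolding S_def by simp
qed

lemma clarke_mean_value_le:
  assumes lip: "locally_lipschitz f"
    and bound: "\<And>p \<zeta>. p \<in> closed_segment a b \<Longrightarrow> \<zeta> \<in> clarke_subdiff f p \<Longrightarrow> norm \<zeta> \<le> K"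
  shows "f b - f a \<le> K * norm (b - a)"
proof -
  define w where "w = b - a"
  define g where "g s = f (a + s *\<^sub>R w)" for s
  have "continuous_on UNIV g"
    unfolding g_def
    by (intro continuous_on_compose2[OF locally_lipschitz_imp_continuous[OF lip]] continuous_intros) auto
  then have "g 1 - g 0 \<le> K * norm w"
  proof (rule upper_dini_mean_value_le)
    fix s e :: real
    assume "s \<in> {0..<1}" "e > 0"
    have "a + s *\<^sub>R w = (1 - s) *\<^sub>R a + s *\<^sub>R b"
      unfolding w_def by (simp add: algebra_simps)
    then have "a + s *\<^sub>R w \<in> closed_segment a b"
      using \<open>s \<in> {0..<1}\<close> unfolding in_segment by auto
    then have "clarke_dir_deriv f (a + s *\<^sub>R w) w \<le> ereal (K * norm w)"
      using bound by (intro clarke_dir_deriv_le_subdiff_bound[OF lip])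
    then have "clarke_dir_deriv f (a + s *\<^sub>R w) w < ereal (K * norm w + e)"
      using \<open>e > 0\<close> by (simp add: order_le_less_trans)
    then have "eventually (\<lambda>t. f (a + s *\<^sub>R w + t *\<^sub>R w) - f (a + s *\<^sub>R w) \<le> (K * norm w + e) * t)
        (at_right 0)"
      by (rule eventually_diff_le_of_clarke_dir_deriv_less)
    then show "eventually (\<lambda>t. g (s + t) - g s \<le> (K * norm w + e) * t) (at_right 0)"
      unfolding g_def by (simp add: scaleR_add_left add.assoc)
  qed
  then show ?thesis
    unfolding g_def w_def by simp
qed

lemma convex_on_power_nonneg: "convex_on {0::real..} (\<lambda>x. x ^ n)"
proof (intro f''_ge0_imp_convex)
  show "((\<lambda>x. x ^ n) has_real_derivative of_nat n * x ^ (n - 1)) (at x)" for x :: real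
    by (rule derivative_eq_intros | simp)+
  show "((\<lambda>x. of_nat n * x ^ (n - 1)) has_real_derivative of_nat n * of_nat (n - 1) * x ^ (n - 2)) (at x)"
    for x :: real
    by (rule derivative_eq_intros | simp add: eval_nat_numeral)+
qed auto

lemma power_add_le_two_powr:
  fixes a b :: real
  assumes "a \<ge> 0" "b \<ge> 0"
  shows "(a + b) ^ n \<le> 2 powr (real n - 1) * (a ^ n + b ^ n)"
proof -
  have "((a + b) / 2) ^ n \<le> (a ^ n + b ^ n) / 2"
    using convex_onD[OF convex_on_power_nonneg[of n], of "1/2" a b] assms
    by (simp add: add_divide_distrib)
  then have "(a + b) ^ n \<le> 2 ^ n * ((a ^ n + b ^ n) / 2)"
    by (simp add: power_divide divide_le_eq mult.commute)
  also have "\<dots> = 2 powr (real n - 1) * (a ^ n + b ^ n)"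
    by (simp add: powr_diff powr_realpow)
  finally show ?thesis .
qed

lemma SPB_subdiff_norm_le:
  assumes "SPB f R1 R2 m" and "norm p \<le> A + C" and "A \<ge> 0" and "C \<ge> 0"
    and "\<zeta> \<in> clarke_subdiff f p"
  shows "norm \<zeta> \<le> 2 powr (real m - 1) * R1 * A ^ m + 2 powr (real m - 1) * R1 * C ^ m + R2"
proof -
  have "R1 \<ge> 0" and "norm \<zeta> \<le> R1 * norm p ^ m + R2"
    using assms(1,5) unfolding SPB_def by blast+
  moreover have "norm p ^ m \<le> 2 powr (real m - 1) * (A ^ m + C ^ m)"
    using power_mono[OF assms(2) norm_ge_zero] power_add_le_two_powr[OF assms(3,4)] by (rule order_trans)
  ultimately have "norm \<zeta> \<le> R1 * (2 powr (real m - 1) * (A ^ m + C ^ m)) + R2"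
    by (meson add_right_mono mult_left_mono order_trans)
  then show ?thesis
    by (simp add: algebra_simps)
qed

theorem lemma3p3:
  fixes f :: "'a::euclidean_space \<Rightarrow> real"
    and R1 R2 :: real and m :: nat
  assumes "SPB f R1 R2 m"
  shows "\<forall>x y. \<bar>f x - f y\<bar> \<le>
     (2 powr (real m - 1) * R1 * norm x ^ m + 2 powr (real m - 1) * R1 * norm (y - x) ^ m + R2)
       * norm (x - y)"
proof (intro allI)
  fix x y :: 'a
  define K where
    "K = 2 powr (real m - 1) * R1 * norm x ^ m + 2 powr (real m - 1) * R1 * norm (y - x) ^ m + R2"
  have lip: "locally_lipschitz f"
    using assms unfolding SPB_def by blast
  have bound: "norm \<zeta> \<le> K" if "p \<in> closed_segment x y" "\<zeta> \<in> clarke_subdiff f p" for p \<zeta>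
  proof -
    have "norm p \<le> norm x + norm (y - x)"
      using norm_triangle_sub[of p x] segment_bound(1)[OF that(1)] by linarith
    then show ?thesis
      unfolding K_def by (rule SPB_subdiff_norm_le[OF assms _ norm_ge_zero norm_ge_zero that(2)])
  qed
  have "f y - f x \<le> K * norm (y - x)"
    using lip bound by (rule clarke_mean_value_le)
  moreover have "f x - f y \<le> K * norm (x - y)"
    using lip bound by (rule clarke_mean_value_le) (simp add: closed_segment_commute)
  ultimately show "\<bar>f x - f y\<bar> \<le> K * norm (x - y)"
    by (simp add: norm_minus_commute)
qed

end
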